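(* Let $m\in[0,1]$, $\varepsilon\ge0$ with $m+\varepsilon>0$, and let $a\in C(m)$. Let $u,v\in L^{m+1}(\Omega)$ if $\varepsilon=0$, and $u,v\in L^2(\Omega)$ if $\varepsilon>0$. Then $(g_\varepsilon^m(u)-g_\varepsilon^m(v))\overline{(u-v)}\in L^1(\Omega)$ and $$\Re\Big(-\mathrm{i}a\int_\Omega\big(g_\varepsilon^m(u)-g_\varepsilon^m(v)\big)\overline{(u-v)}\,dx\Big)\ge0.$$
   Context: $\Omega\subseteq\mathbb{R}^N$ nonempty open; functions complex-valued. $g_\varepsilon^m(u)(x)=(|u(x)|^2+\varepsilon)^{-\frac{1-m}{2}}u(x)$ (with value $0$ where $u(x)=0$ when $\varepsilon=0$). $C(m)=\{z\in\mathbb{C}:\Im z>0,\ 2\sqrt m\,\Im z\ge(1-m)|\Re z|\}$. *)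

theory Defs
  imports "HOL-Analysis.Analysis"
begin

definition g_eps :: "real \<Rightarrow> real \<Rightarrow> ('a \<Rightarrow> complex) \<Rightarrow> 'a \<Rightarrow> complex" where
  "g_eps eps m u x =
     (if u x = 0 then 0
      else complex_of_real (((norm (u x))\<^sup>2 + eps) powr (- (1 - m) / 2))) * u x"

definition cone_C :: "real \<Rightarrow> complex set" where
  "cone_C m = {z. Im z > 0 \<and> 2 * sqrt m * Im z \<ge> (1 - m) * \<bar>Re z\<bar>}"

definition in_Lp :: "'a::euclidean_space set \<Rightarrow> real \<Rightarrow> ('a \<Rightarrow> complex) \<Rightarrow> bool" where
  "in_Lp \<Omega> p u \<longleftrightarrow> u \<in> borel_measurable (lebesgue_on \<Omega>)
      \<and> integrable (lebesgue_on \<Omega>) (\<lambda>x. norm (u x) powr p)"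

end

theory Submission
  imports Defs
begin

text \<open>
  Write \<open>g(z) = p z\<close> and \<open>g(w) = q w\<close> with \<open>p = (|z|\<^sup>2 + \<epsilon>)\<^bsup>-(1-m)/2\<^esup>\<close>, \<open>q\<close> likewise.
  The pointwise pairing \<open>P = (g(z) - g(w)) conj(z - w)\<close> lies in the sector
  \<open>2 \<surd>m |Im P| \<le> (1 - m) Re P\<close>: with \<open>r = |z| \<ge> s = |w|\<close> and \<open>\<mu> = p r / (q s)\<close> one has
  \<open>(r/s)\<^sup>m \<le> \<mu> \<le> r/s\<close>, and the sector condition reduces, after an AM-GM step in the angle
  between \<open>z\<close> and \<open>w\<close>, to \<open>4m(\<rho> - \<mu>)\<^sup>2 \<le> (1-m)\<^sup>2(\<mu>\<^sup>2 - 1)(\<rho>\<^sup>2 - 1)\<close> for \<open>\<rho> = r/s\<close>.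
  Its worst case \<open>\<mu> = \<rho>\<^sup>m\<close> becomes, with \<open>\<rho> = e\<^sup>L\<close>, a monotonicity statement about
  hyperbolic functions of \<open>L\<close>. Finally, \<open>a \<in> C(m)\<close> is what makes \<open>Re(-i a P) \<ge> 0\<close> on that
  sector, and this pointwise inequality integrates.
\<close>

definition g_scalar :: "real \<Rightarrow> real \<Rightarrow> complex \<Rightarrow> complex" where
  "g_scalar eps m z =
     (if z = 0 then 0 else complex_of_real (((cmod z)\<^sup>2 + eps) powr (- (1 - m) / 2))) * z"

definition g_pairing :: "real \<Rightarrow> real \<Rightarrow> complex \<Rightarrow> complex \<Rightarrow> complex" where
  "g_pairing eps m z w = (g_scalar eps m z - g_scalar eps m w) * cnj (z - w)"

lemma g_eps_pairing_eq:
  "(g_eps eps m u x - g_eps eps m v x) * cnj (u x - v x) = g_pairing eps m (u x) (v x)"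
  unfolding g_eps_def g_scalar_def g_pairing_def by simp

definition sector :: "real \<Rightarrow> complex set" where
  "sector m = {P. 0 \<le> Re P \<and> 2 * sqrt m * \<bar>Im P\<bar> \<le> (1 - m) * Re P}"

subsection \<open>A one-variable inequality\<close>

lemma sinh_weighted_diff_nonneg:
  fixes m L :: real assumes m: "0 \<le> m" "m \<le> 1" and L: "0 \<le> L"
  shows "(1 - m) * sinh ((1 + m) * L) - (1 + m) * sinh ((1 - m) * L) \<ge> 0"
proof -
  let ?f = "\<lambda>L. (1 - m) * sinh ((1 + m) * L) - (1 + m) * sinh ((1 - m) * L)"
  have "?f 0 \<le> ?f L"
  proof (rule DERIV_nonneg_imp_nondecreasing[OF L])
    fix x :: real assume x: "0 \<le> x" "x \<le> L"
    have "DERIV ?f x :>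
        (1 - m) * (cosh ((1 + m) * x) * (1 + m)) - (1 + m) * (cosh ((1 - m) * x) * (1 - m))"
      by (auto intro!: derivative_eq_intros)
    moreover have "(1 - m) * (cosh ((1 + m) * x) * (1 + m)) - (1 + m) * (cosh ((1 - m) * x) * (1 - m))
        = ((1-m)*(1+m)) * (cosh ((1+m)*x) - cosh ((1-m)*x))"
      by (simp add: algebra_simps)
    moreover have "cosh ((1 - m) * x) \<le> cosh ((1 + m) * x)"
      using x m by (subst cosh_real_nonneg_le_iff) (auto intro: mult_right_mono)
    ultimately show "\<exists>y. DERIV ?f x :> y \<and> y \<ge> 0"
      using m by auto
  qed
  thus ?thesis by simp
qed

lemma cosh_weighted_diff_nonneg:
  fixes m L :: real assumes m: "0 \<le> m" "m \<le> 1" and L: "0 \<le> L"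
  shows "(1 - m)^2 * (cosh ((1 + m) * L) - cosh ((1 - m) * L))
           - 4 * m * (cosh ((1 - m) * L) - 1) \<ge> 0"
proof -
  let ?f = "\<lambda>L. (1 - m)^2 * (cosh ((1 + m) * L) - cosh ((1 - m) * L))
                  - 4 * m * (cosh ((1 - m) * L) - 1)"
  have "?f 0 \<le> ?f L"
  proof (rule DERIV_nonneg_imp_nondecreasing[OF L])
    fix x :: real assume x: "0 \<le> x" "x \<le> L"
    have "DERIV ?f x :> (1 - m)^2 * (sinh ((1 + m) * x) * (1 + m) - sinh ((1 - m) * x) * (1 - m))
                         - 4*m*(sinh ((1-m)*x) * (1-m))"
      by (auto intro!: derivative_eq_intros)
    moreover have "(1 - m)^2 * (sinh ((1 + m) * x) * (1 + m) - sinh ((1 - m) * x) * (1 - m))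
          - 4 * m * (sinh ((1 - m) * x) * (1 - m))
       = ((1-m)*(1+m)) * ((1-m) * sinh ((1+m)*x) - (1+m) * sinh ((1-m)*x))"
      by (simp add: algebra_simps power2_eq_square)
    moreover have "0 \<le> ((1 - m) * (1 + m)) * ((1 - m) * sinh ((1 + m) * x) - (1 + m) * sinh ((1 - m) * x))"
      using sinh_weighted_diff_nonneg[OF m x(1)] m by simp
    ultimately show "\<exists>y. DERIV ?f x :> y \<and> y \<ge> 0" by auto
  qed
  thus ?thesis by simp
qed

lemma powr_gap_ineq:
  fixes m \<rho> :: real assumes m: "0 \<le> m" "m \<le> 1" and \<rho>: "1 \<le> \<rho>"
  shows "4 * m * (\<rho> - \<rho> powr m)^2 \<le> (1 - m)^2 * ((\<rho> powr m)^2 - 1) * (\<rho>^2 - 1)"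
proof -
  define L where "L = ln \<rho>"
  define A where "A = exp L"
  define B where "B = exp (m * L)"
  have L: "0 \<le> L" using \<rho> by (simp add: L_def)
  have A: "\<rho> = A" using \<rho> by (simp add: A_def L_def)
  have B: "\<rho> powr m = B" using \<rho> by (simp add: B_def L_def powr_def)
  have pos: "A > 0" "B > 0" by (simp_all add: A_def B_def)
  have e1: "exp ((1 + m) * L) = A * B" by (simp add: A_def B_def algebra_simps flip: exp_add)
  have e2: "exp (-((1 + m) * L)) = 1/(A * B)" unfolding exp_minus e1 by (simp add: divide_inverse)
  have e3: "exp ((1 - m) * L) = A/B" by (simp add: A_def B_def algebra_simps flip: exp_diff)
  have e4: "exp (-((1 - m) * L)) = B/A" unfolding exp_minus e3 by (simp add: divide_inverse)
  have cosh_AB: "cosh ((1 + m) * L) = (A * B + 1/(A * B))/2" "cosh ((1 - m) * L) = (A/B + B/A)/2"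
    by (simp_all add: cosh_def e1 e2 e3 e4)
  have "0 \<le> (A * B) * ((1 - m)^2 * (cosh ((1 + m) * L) - cosh ((1 - m) * L))
                          - 4 * m * (cosh ((1 - m) * L) - 1))"
    using cosh_weighted_diff_nonneg[OF m L] pos by simp
  also have "\<dots> = ((1 - m)^2 * (B^2 - 1) * (A^2 - 1) - 4 * m * (A - B)^2) / 2"
    unfolding cosh_AB using pos by (simp add: field_simps power2_eq_square)
  finally show ?thesis unfolding B by (simp add: A)
qed

lemma gap_ineq:
  fixes m \<rho> \<mu> :: real assumes m: "0 \<le> m" "m \<le> 1" and \<rho>: "1 \<le> \<rho>"
    and \<mu>: "\<rho> powr m \<le> \<mu>" "\<mu> \<le> \<rho>"
  shows "4 * m * (\<rho> - \<mu>)^2 \<le> (1 - m)^2 * (\<mu>^2 - 1) * (\<rho>^2 - 1)"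
proof -
  have one_le: "1 \<le> \<rho> powr m" using \<rho> m by (simp add: ge_one_powr_ge_zero)
  have "(\<rho> - \<mu>)^2 \<le> (\<rho> - \<rho> powr m)^2" using \<mu> by (intro power_mono) auto
  hence "4 * m * (\<rho> - \<mu>)^2 \<le> 4 * m * (\<rho> - \<rho> powr m)^2" using m by (simp add: mult_left_mono)
  also have "\<dots> \<le> (1 - m)^2 * ((\<rho> powr m)^2 - 1) * (\<rho>^2 - 1)"
    by (rule powr_gap_ineq[OF m \<rho>])
  also have "\<dots> \<le> (1 - m)^2 * (\<mu>^2 - 1) * (\<rho>^2 - 1)"
  proof -
    have "(\<rho> powr m)^2 \<le> \<mu>^2" using \<mu> one_le by (intro power_mono) auto
    moreover have "0 \<le> \<rho>^2 - 1" using \<rho> by (simp add: one_le_power)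
    ultimately show ?thesis by (intro mult_right_mono mult_left_mono) auto
  qed
  finally show ?thesis .
qed

lemma gap_ineq_homogeneous:
  fixes m r s H K :: real assumes m: "0 \<le> m" "m \<le> 1" and rs: "0 < s" "s \<le> r"
    and HK: "0 < K" "(r/s) powr m \<le> H/K" "H/K \<le> r/s"
  shows "4 * m * (H * s - K * r)^2 \<le> (1 - m)^2 * (H^2 - K^2) * (r^2 - s^2)"
proof -
  have scale1: "(H * s - K * r)^2 = (K * s)^2 * (r/s - H/K)^2"
    and scale2: "(H^2 - K^2) * (r^2 - s^2) = (K * s)^2 * (((H/K)^2 - 1) * ((r/s)^2 - 1))"
    using rs HK by (simp_all add: field_simps power2_eq_square)
  have "(K * s)^2 * (4 * m * (r/s - H/K)^2)
      \<le> (K * s)^2 * ((1 - m)^2 * ((H/K)^2 - 1) * ((r/s)^2 - 1))"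
    using gap_ineq[OF m _ HK(2,3)] rs by (intro mult_left_mono) auto
  thus ?thesis unfolding scale1 mult.assoc[of "(1 - m)^2"] scale2 by (simp add: algebra_simps)
qed

subsection \<open>The pointwise sector property\<close>

lemma modulus_ratio_bounds:
  fixes m eps r s :: real
  assumes m: "0 \<le> m" "m \<le> 1" and eps: "0 \<le> eps" and rs: "0 < s" "s \<le> r"
  defines "p \<equiv> (r^2 + eps) powr (-(1 - m)/2)" and "q \<equiv> (s^2 + eps) powr (-(1 - m)/2)"
  shows "(r/s) powr m \<le> (p * r)/(q * s)" and "(p * r)/(q * s) \<le> r/s"
proof -
  have pos: "0 < s^2 + eps" "0 < r^2 + eps" using rs eps by (auto intro: add_pos_nonneg)
  define R where "R = (r^2 + eps)/(s^2 + eps)"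
  have R1: "1 \<le> R" unfolding R_def using pos rs by (simp add: power_mono)
  have pq: "p/q = R powr (-(1 - m)/2)" unfolding p_def q_def R_def using pos by (simp add: powr_divide)
  have rs_sq: "1 \<le> (r/s)^2" using rs by simp
  have "eps \<le> (r/s)^2 * eps" using mult_left_mono[OF rs_sq eps] by (simp add: mult.commute)
  moreover have "(r/s)^2 * s^2 = r^2" using rs by (simp add: power_divide)
  ultimately have "r^2 + eps \<le> (r/s)^2 * (s^2 + eps)" by (simp only: distrib_left)
  hence "R \<le> (r/s)^2" unfolding R_def using pos by (subst pos_divide_le_eq) auto
  hence "((r/s)^2) powr (-(1 - m)/2) \<le> p/q"
    unfolding pq using R1 m by (intro powr_mono2') auto
  moreover have "((r/s)^2) powr (-(1 - m)/2) = (r/s) powr (m - 1)"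
    using rs by (simp add: powr_powr flip: powr_numeral) (simp add: diff_divide_distrib)
  ultimately have lower: "(r/s) powr (m - 1) \<le> p/q" by simp
  have upper: "p/q \<le> 1" unfolding pq using R1 m powr_mono[of "-(1 - m)/2" 0 R] by simp
  have split: "(p * r)/(q * s) = (r/s) * (p/q)" by (simp add: ac_simps)
  have "(r/s) powr m = (r/s) powr 1 * (r/s) powr (m - 1)" unfolding powr_add[symmetric] by simp
  also have "\<dots> = (r/s) * (r/s) powr (m - 1)" using rs by simp
  also have "\<dots> \<le> (r/s) * (p/q)" using lower rs by (intro mult_left_mono) auto
  finally show "(r/s) powr m \<le> (p * r)/(q * s)" unfolding split .
  show "(p * r)/(q * s) \<le> r/s" unfolding split using mult_left_mono[OF upper, of "r/s"] rs by simp
qed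

lemma modulus_pair_ineq:
  fixes m eps r s :: real
  assumes m: "0 \<le> m" "m \<le> 1" and eps: "0 \<le> eps" and rs: "0 < s" "s \<le> r"
  defines "p \<equiv> (r^2 + eps) powr (-(1 - m)/2)" and "q \<equiv> (s^2 + eps) powr (-(1 - m)/2)"
  shows "4 * m * (r * s * (p - q))^2
           \<le> (1 - m)^2 * ((p * r - q * s) * (r - s)) * ((p * r + q * s) * (r + s))"
    and "0 \<le> (p * r - q * s) * (r - s)"
proof -
  note bounds = modulus_ratio_bounds[OF m eps rs, folded p_def q_def]
  have "0 < s^2 + eps" using rs eps by (simp add: add_pos_nonneg)
  hence qs: "0 < q * s" using rs unfolding q_def by simp
  have "4 * m * ((p * r) * s - (q * s) * r)^2
      \<le> (1 - m)^2 * ((p * r)^2 - (q * s)^2) * (r^2 - s^2)"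
    by (rule gap_ineq_homogeneous[OF m rs qs bounds])
  thus "4 * m * (r * s * (p - q))^2
          \<le> (1 - m)^2 * ((p * r - q * s) * (r - s)) * ((p * r + q * s) * (r + s))"
    by (simp add: algebra_simps power2_eq_square)
  have "1 \<le> (r/s) powr m" using rs m by (simp add: ge_one_powr_ge_zero)
  hence "1 * (q * s) \<le> (r/s) powr m * (q * s)" using qs by (intro mult_right_mono) auto
  also have "\<dots> \<le> p * r" using bounds(1) qs by (simp add: le_divide_eq)
  finally have "q * s \<le> p * r" by simp
  thus "0 \<le> (p * r - q * s) * (r - s)" using rs by simp
qed

lemma am_gm_transfer:
  fixes m p q r s U Z e f X :: real
  assumes gap: "4 * m * (r * s * (p - q))^2 \<le> (1 - m)^2 * U * Z"
    and ef: "0 \<le> e" "0 \<le> f" and rs: "r * s \<noteq> 0" and X: "2 * r * s * X = U * f + Z * e"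
  shows "4 * m * (p - q)^2 * (e * f) \<le> (1 - m)^2 * X^2"
proof -
  have am_gm: "4 * (U * Z) * (e * f) \<le> (U * f + Z * e)^2"
    using zero_le_power2[of "U * f - Z * e"] by (simp add: algebra_simps power2_eq_square)
  have "(4 * (r * s)^2) * (4 * m * (p - q)^2 * (e * f))
      = (4 * m * (r * s * (p - q))^2) * (4 * (e * f))"
    by (simp add: algebra_simps power2_eq_square)
  also have "\<dots> \<le> ((1 - m)^2 * U * Z) * (4 * (e * f))"
    using gap ef by (intro mult_right_mono) auto
  also have "\<dots> \<le> (1 - m)^2 * (U * f + Z * e)^2"
    using mult_left_mono[OF am_gm, of "(1 - m)^2"] by (simp add: algebra_simps)
  also have "\<dots> = (4 * (r * s)^2) * ((1 - m)^2 * X^2)"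
    unfolding X[symmetric] by (simp add: algebra_simps power2_eq_square)
  finally show ?thesis by (rule mult_left_le_imp_le) (use rs in simp)
qed

lemma scaled_pair_in_sector:
  fixes z w :: complex and m p q :: real
  defines "r \<equiv> cmod z" and "s \<equiv> cmod w"
  assumes m: "0 \<le> m" "m \<le> 1" and pq: "0 \<le> p" "0 \<le> q"
    and gap: "4 * m * (r * s * (p - q))^2
                \<le> (1 - m)^2 * ((p * r - q * s) * (r - s)) * ((p * r + q * s) * (r + s))"
    and mono: "0 \<le> (p * r - q * s) * (r - s)"
  shows "(of_real p * z - of_real q * w) * cnj (z - w) \<in> sector m"
proof -
  define P where "P = (of_real p * z - of_real q * w) * cnj (z - w)"
  define t where "t = Re (z * cnj w)"
  define u where "u = Im (z * cnj w)"
  have ReP: "Re P = p * r^2 + q * s^2 - (p + q) * t" and ImP: "Im P = (q - p) * u"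
    unfolding P_def r_def s_def t_def u_def cmod_power2
    by (simp_all add: algebra_simps power2_eq_square)
  have tu: "t^2 + u^2 = (r * s)^2"
    unfolding t_def u_def r_def s_def cmod_power2[of "z * cnj w", symmetric]
    by (simp add: norm_mult)
  define e where "e = r * s - t"
  define f where "f = r * s + t"
  \<comment> \<open>\<open>(Im P)\<^sup>2 = (p - q)\<^sup>2 e f\<close> and \<open>2 r s Re P = U f + Z e\<close>, where \<open>U, Z\<close> are the two
    factors on the right of \<open>gap\<close>; AM-GM on the latter gives the sector bound.\<close>
  have "t^2 \<le> (r * s)^2" using tu zero_le_power2[of u] by linarith
  hence "\<bar>t\<bar> \<le> \<bar>r * s\<bar>" by (simp only: abs_le_square_iff)
  hence "\<bar>t\<bar> \<le> r * s" unfolding r_def s_def by simp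
  hence ef: "0 \<le> e" "0 \<le> f" unfolding e_def f_def by auto
  have ReP_split: "Re P = (p * r - q * s) * (r - s) + (p + q) * e"
    unfolding ReP e_def by (simp add: algebra_simps power2_eq_square)
  have Re_nonneg: "0 \<le> Re P" unfolding ReP_split using mono pq ef by simp
  have "(2 * sqrt m * \<bar>Im P\<bar>)^2 \<le> ((1 - m) * Re P)^2"
  proof (cases "r * s = 0")
    case True
    hence "t^2 + u^2 = 0" using tu by simp
    hence "u = 0" by (simp add: sum_power2_eq_zero_iff)
    thus ?thesis using ImP by simp
  next
    case False
    have u_sq: "u^2 = e * f"
      unfolding e_def f_def using tu by (simp add: algebra_simps power2_eq_square)
    have "(2 * sqrt m * \<bar>Im P\<bar>)^2 = 4 * (sqrt m)^2 * (Im P)^2" by (simp add: power_mult_distrib)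
    also have "\<dots> = 4 * m * (Im P)^2" using m by simp
    also have "\<dots> = 4 * m * (p - q)^2 * (e * f)"
      unfolding ImP power_mult_distrib u_sq by (simp add: power2_commute)
    also have "\<dots> \<le> (1 - m)^2 * (Re P)^2"
      by (rule am_gm_transfer[OF gap ef False])
        (simp add: ReP e_def f_def algebra_simps power2_eq_square)
    finally show ?thesis by (simp add: power_mult_distrib)
  qed
  hence "2 * sqrt m * \<bar>Im P\<bar> \<le> (1 - m) * Re P"
    by (rule power2_le_imp_le) (use Re_nonneg m in auto)
  with Re_nonneg have "P \<in> sector m" unfolding sector_def by simp
  thus ?thesis unfolding P_def .
qed

lemma g_pairing_in_sector_ordered:
  assumes m: "0 \<le> m" "m \<le> 1" and eps: "0 \<le> eps" and zw: "cmod w \<le> cmod z"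
  shows "g_pairing eps m z w \<in> sector m"
proof -
  define p where "p = ((cmod z)^2 + eps) powr (-(1 - m)/2)"
  define q where "q = ((cmod w)^2 + eps) powr (-(1 - m)/2)"
  have "g_pairing eps m z w = (of_real p * z - of_real q * w) * cnj (z - w)"
    unfolding g_pairing_def g_scalar_def p_def q_def by simp
  also have "\<dots> \<in> sector m"
  proof (cases "w = 0")
    case True
    thus ?thesis using m by (intro scaled_pair_in_sector) (auto simp: p_def q_def)
  next
    case False
    note ineq = modulus_pair_ineq[OF m eps _ zw, folded p_def q_def]
    show ?thesis using False m ineq by (intro scaled_pair_in_sector) (auto simp: p_def q_def)
  qed
  finally show ?thesis .
qed

lemma g_pairing_commute: "g_pairing eps m w z = g_pairing eps m z w"
  unfolding g_pairing_def by (simp add: algebra_simps)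

lemma g_pairing_in_sector:
  assumes "0 \<le> m" "m \<le> 1" "0 \<le> eps"
  shows "g_pairing eps m z w \<in> sector m"
  using g_pairing_in_sector_ordered[OF assms, of w z] g_pairing_in_sector_ordered[OF assms, of z w]
  by (cases "cmod w \<le> cmod z") (auto simp: g_pairing_commute)

subsection \<open>The cone \<open>C(m)\<close> and integration\<close>

lemma cone_C_times_sector_nonneg:
  assumes a: "a \<in> cone_C m" and m: "0 \<le> m" "m \<le> 1" and P: "P \<in> sector m"
  shows "0 \<le> Re (- \<i> * a * P)"
proof -
  have ai: "0 < Im a" and ac: "(1 - m) * \<bar>Re a\<bar> \<le> 2 * sqrt m * Im a"
    using a by (auto simp: cone_C_def)
  have P0: "0 \<le> Re P" and PC: "2 * sqrt m * \<bar>Im P\<bar> \<le> (1 - m) * Re P"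
    using P by (auto simp: sector_def)
  have key: "\<bar>Re a\<bar> * \<bar>Im P\<bar> \<le> Im a * Re P"
  proof (cases "0 < m \<and> m < 1")
    case True
    have "((1 - m) * (2 * sqrt m)) * (\<bar>Re a\<bar> * \<bar>Im P\<bar>)
        \<le> ((1 - m) * (2 * sqrt m)) * (Im a * Re P)"
      using mult_mono[OF ac PC] ai m by (simp add: algebra_simps)
    thus ?thesis by (rule mult_left_le_imp_le) (use True in simp)
  next
    case False
    hence "m = 0 \<or> m = 1" using m by auto
    hence "Re a = 0 \<or> Im P = 0" using ac PC by auto
    thus ?thesis using ai P0 by auto
  qed
  have "- (Re a * Im P) \<le> \<bar>Re a\<bar> * \<bar>Im P\<bar>" by (simp flip: abs_mult)
  moreover have "Re (- \<i> * a * P) = Im a * Re P + Re a * Im P" by simp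
  ultimately show ?thesis using key by linarith
qed

lemma cone_C_times_integral_nonneg:
  assumes a: "a \<in> cone_C m" and m: "0 \<le> m" "m \<le> 1"
    and f: "integrable M f" and sector: "\<And>x. f x \<in> sector m"
  shows "0 \<le> Re (- \<i> * a * integral\<^sup>L M f)"
proof -
  have "Re (- \<i> * a * integral\<^sup>L M f) = (\<integral>x. Re (- \<i> * a * f x) \<partial>M)"
    using f by (simp add: integral_Re integrable_mult_right)
  also have "\<dots> \<ge> 0"
    using cone_C_times_sector_nonneg[OF a m sector]
    by (intro Bochner_Integration.integral_nonneg) auto
  finally show ?thesis .
qed

subsection \<open>Integrability\<close>

lemma g_scalar_measurable [measurable]: "g_scalar eps m \<in> borel_measurable borel"
  unfolding g_scalar_def by measurable

lemma g_pairing_measurable: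
  assumes [measurable]: "u \<in> borel_measurable M" "v \<in> borel_measurable M"
  shows "(\<lambda>x. g_pairing eps m (u x) (v x)) \<in> borel_measurable M"
proof -
  have [measurable]: "cnj \<in> borel_measurable borel"
    by (intro borel_measurable_continuous_onI continuous_on_cnj continuous_on_id)
  show ?thesis unfolding g_pairing_def by measurable
qed

lemma norm_g_pairing_le:
  "norm (g_pairing eps m z w)
     \<le> (norm (g_scalar eps m z) + norm (g_scalar eps m w)) * (cmod z + cmod w)"
  unfolding g_pairing_def norm_mult complex_mod_cnj by (intro mult_mono norm_triangle_ineq4) auto

lemma norm_g_scalar_zero_eps: "norm (g_scalar 0 m z) = cmod z powr m"
proof (cases "z = 0")
  case False
  hence "norm (g_scalar 0 m z) = ((cmod z)^2) powr (-(1 - m)/2) * cmod z"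
    by (simp add: g_scalar_def norm_mult)
  also have "((cmod z)^2) powr (-(1 - m)/2) = cmod z powr (m - 1)"
    using False by (simp add: powr_powr flip: powr_numeral) (simp add: diff_divide_distrib)
  also have "cmod z powr (m - 1) * cmod z = cmod z powr m"
    using powr_add[of "cmod z" "m - 1" 1] by simp
  finally show ?thesis .
qed (simp add: g_scalar_def)

lemma norm_g_scalar_le:
  assumes "0 < eps" "m \<le> 1" shows "norm (g_scalar eps m z) \<le> eps powr (-(1 - m)/2) * cmod z"
  using assms by (auto simp: g_scalar_def norm_mult intro!: mult_right_mono powr_mono2')

lemma powr_rearrangement:
  fixes a b m :: real assumes "0 \<le> a" "0 \<le> b" "0 \<le> m"
  shows "a powr m * b + b powr m * a \<le> a powr (m + 1) + b powr (m + 1)"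
proof -
  have "0 \<le> (a powr m - b powr m) * (a - b)"
  proof (cases "a \<le> b")
    case True
    thus ?thesis using assms powr_mono2[of m a b] by (intro mult_nonpos_nonpos) auto
  next
    case False
    thus ?thesis using assms powr_mono2[of m b a] by (intro mult_nonneg_nonneg) auto
  qed
  thus ?thesis using assms by (simp add: powr_add algebra_simps)
qed

lemma norm_g_pairing_zero_eps_le:
  assumes "0 \<le> m"
  shows "norm (g_pairing 0 m z w) \<le> 2 * (cmod z powr (m + 1) + cmod w powr (m + 1))"
  using norm_g_pairing_le[of 0 m z w] powr_rearrangement[of "cmod z" "cmod w" m] assms
  by (simp add: norm_g_scalar_zero_eps powr_add algebra_simps)

lemma norm_g_pairing_pos_eps_le:
  assumes eps: "0 < eps" and m: "m \<le> 1"
  shows "norm (g_pairing eps m z w) \<le> 2 * eps powr (-(1 - m)/2) * ((cmod z)^2 + (cmod w)^2)"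
proof -
  let ?c = "eps powr (-(1 - m)/2)"
  have "norm (g_pairing eps m z w)
      \<le> (norm (g_scalar eps m z) + norm (g_scalar eps m w)) * (cmod z + cmod w)"
    by (rule norm_g_pairing_le)
  also have "\<dots> \<le> (?c * cmod z + ?c * cmod w) * (cmod z + cmod w)"
    by (intro mult_right_mono add_mono norm_g_scalar_le[OF eps m]) simp
  also have "\<dots> = ?c * (cmod z + cmod w)^2" by (simp add: algebra_simps power2_eq_square)
  also have "\<dots> \<le> ?c * (2 * ((cmod z)^2 + (cmod w)^2))"
    using zero_le_power2[of "cmod z - cmod w"]
    by (intro mult_left_mono) (auto simp: algebra_simps power2_eq_square)
  finally show ?thesis by (simp add: algebra_simps)
qed

lemma integrable_g_pairing_zero_eps:
  assumes m: "0 \<le> m" and u: "in_Lp \<Omega> (m + 1) u" and v: "in_Lp \<Omega> (m + 1) v"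
  shows "integrable (lebesgue_on \<Omega>) (\<lambda>x. g_pairing 0 m (u x) (v x))"
proof (rule Bochner_Integration.integrable_bound)
  show "integrable (lebesgue_on \<Omega>)
          (\<lambda>x. 2 * (cmod (u x) powr (m + 1) + cmod (v x) powr (m + 1)))"
    using u v unfolding in_Lp_def by (intro integrable_mult_right integrable_add) auto
  show "(\<lambda>x. g_pairing 0 m (u x) (v x)) \<in> borel_measurable (lebesgue_on \<Omega>)"
    using u v unfolding in_Lp_def by (intro g_pairing_measurable) auto
  show "AE x in lebesgue_on \<Omega>. norm (g_pairing 0 m (u x) (v x))
          \<le> norm (2 * (cmod (u x) powr (m + 1) + cmod (v x) powr (m + 1)))"
    using norm_g_pairing_zero_eps_le[OF m] by (intro AE_I2) (simp add: abs_of_nonneg)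
qed

lemma integrable_g_pairing_pos_eps:
  assumes eps: "0 < eps" and m: "m \<le> 1" and u: "in_Lp \<Omega> 2 u" and v: "in_Lp \<Omega> 2 v"
  shows "integrable (lebesgue_on \<Omega>) (\<lambda>x. g_pairing eps m (u x) (v x))"
proof (rule Bochner_Integration.integrable_bound)
  let ?c = "eps powr (-(1 - m)/2)"
  show "integrable (lebesgue_on \<Omega>) (\<lambda>x. 2 * ?c * (cmod (u x) powr 2 + cmod (v x) powr 2))"
    using u v unfolding in_Lp_def by (intro integrable_mult_right integrable_add) auto
  show "(\<lambda>x. g_pairing eps m (u x) (v x)) \<in> borel_measurable (lebesgue_on \<Omega>)"
    using u v unfolding in_Lp_def by (intro g_pairing_measurable) auto
  show "AE x in lebesgue_on \<Omega>. norm (g_pairing eps m (u x) (v x))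
          \<le> norm (2 * ?c * (cmod (u x) powr 2 + cmod (v x) powr 2))"
    using norm_g_pairing_pos_eps_le[OF eps m] by (intro AE_I2) (simp add: abs_of_nonneg)
qed

theorem corollary5p8:
  fixes \<Omega> :: "'a::euclidean_space set"
    and m eps :: real and a :: complex and u v :: "'a \<Rightarrow> complex"
  assumes "open \<Omega>" and "\<Omega> \<noteq> {}"
    and "0 \<le> m" and "m \<le> 1" and "0 \<le> eps" and "m + eps > 0"
    and "a \<in> cone_C m"
    and "eps = 0 \<Longrightarrow> in_Lp \<Omega> (m + 1) u \<and> in_Lp \<Omega> (m + 1) v"
    and "eps > 0 \<Longrightarrow> in_Lp \<Omega> 2 u \<and> in_Lp \<Omega> 2 v"
  shows "integrable (lebesgue_on \<Omega>)
           (\<lambda>x. (g_eps eps m u x - g_eps eps m v x) * cnj (u x - v x))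
     \<and> Re (- \<i> * a * (LINT x|lebesgue_on \<Omega>. (g_eps eps m u x - g_eps eps m v x) * cnj (u x - v x))) \<ge> 0"
proof -
  have int: "integrable (lebesgue_on \<Omega>) (\<lambda>x. g_pairing eps m (u x) (v x))"
  proof (cases "eps = 0")
    case True
    thus ?thesis using assms(3,8) integrable_g_pairing_zero_eps by blast
  next
    case False
    hence "0 < eps" using assms(5) by simp
    thus ?thesis using assms(4,9) integrable_g_pairing_pos_eps by blast
  qed
  moreover have "Re (- \<i> * a * (LINT x|lebesgue_on \<Omega>. g_pairing eps m (u x) (v x))) \<ge> 0"
    using assms(3-5)
    by (intro cone_C_times_integral_nonneg[OF assms(7) _ _ int] g_pairing_in_sector)
  ultimately show ?thesis unfolding g_eps_pairing_eq by simp
qed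

end
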